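(* Let $k\ge 3$ and let $D$ be a digraph on $n$ vertices with $\delta^0(D)\ge\lceil (n+k)/2\rceil-1$. Let $S=(s_1,\dots,s_k)$ be a sequence of distinct vertices of $D$, let $C$ be a longest $S$-cycle in $D$, and suppose $C$ is not Hamiltonian. Let $H$ be the subdigraph of $D$ induced by $V(D)\setminus V(C)$. Then $H$ is Hamiltonian connected and $d^-_H(x)+d^+_H(y)\ge |H|+k-2$ for all (not necessarily distinct) vertices $x,y\in H$. Moreover, every digraph obtained from $H$ by deleting at most $2$ vertices is strongly connected, and $k\le |H|\le \lfloor (n-k)/2\rfloor$.
   Context: Digraphs have no loops and at most one edge in each direction between any two vertices; paths and cycles are directed. $\delta^0(D)=\min\{\delta^+(D),\delta^-(D)\}$. An $S$-cycle is a directed cycle in $D$ which encounters $s_1,\dots,s_k$ in this order. For $x\in H$, $d^+_H(x)$ and $d^-_H(x)$ denote the out- and indegree of $x$ within $H$. A digraph is strongly connected if for every ordered pair $x,y$ of vertices there is a directed $x$-$y$ path, and Hamiltonian connected if for every ordered pair of distinct vertices $x,y$ there is a directed Hamilton path from $x$ to $y$. *)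

theory Defs
  imports Complex_Main "HOL-Library.Sublist"
begin

text \<open>A digraph is a finite vertex set V with an edge relation E \<subseteq> V \<times> V without loops.
  Using a relation, there is at most one edge in each direction between two vertices.\<close>
definition digraph :: "'a set \<Rightarrow> ('a \<times> 'a) set \<Rightarrow> bool" where
  "digraph V E \<longleftrightarrow> finite V \<and> E \<subseteq> V \<times> V \<and> (\<forall>x. (x, x) \<notin> E)"

definition outdeg :: "'a set \<Rightarrow> ('a \<times> 'a) set \<Rightarrow> 'a \<Rightarrow> nat" where
  "outdeg V E x = card {y \<in> V. (x, y) \<in> E}"

definition indeg :: "'a set \<Rightarrow> ('a \<times> 'a) set \<Rightarrow> 'a \<Rightarrow> nat" where
  "indeg V E x = card {y \<in> V. (y, x) \<in> E}"

definition min_semidegree :: "'a set \<Rightarrow> ('a \<times> 'a) set \<Rightarrow> nat" where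
  "min_semidegree V E = min (Min (outdeg V E ` V)) (Min (indeg V E ` V))"

definition induced_edges :: "('a \<times> 'a) set \<Rightarrow> 'a set \<Rightarrow> ('a \<times> 'a) set" where
  "induced_edges E W = E \<inter> (W \<times> W)"

definition is_path :: "('a \<times> 'a) set \<Rightarrow> 'a list \<Rightarrow> bool" where
  "is_path E p \<longleftrightarrow> p \<noteq> [] \<and> distinct p \<and> (\<forall>i. Suc i < length p \<longrightarrow> (p ! i, p ! Suc i) \<in> E)"

definition is_cycle :: "('a \<times> 'a) set \<Rightarrow> 'a list \<Rightarrow> bool" where
  "is_cycle E c \<longleftrightarrow> length c \<ge> 2 \<and> distinct c \<and>
     (\<forall>i < length c. (c ! i, c ! ((i + 1) mod length c)) \<in> E)"

text \<open>An S-cycle: a cycle encountering s_1,\<dots>,s_k in this (cyclic) order.\<close>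
definition is_S_cycle :: "('a \<times> 'a) set \<Rightarrow> 'a list \<Rightarrow> 'a list \<Rightarrow> bool" where
  "is_S_cycle E S c \<longleftrightarrow> is_cycle E c \<and> (\<exists>j. subseq S (rotate j c))"

definition hamiltonian_connected :: "'a set \<Rightarrow> ('a \<times> 'a) set \<Rightarrow> bool" where
  "hamiltonian_connected V E \<longleftrightarrow>
     (\<forall>x\<in>V. \<forall>y\<in>V. x \<noteq> y \<longrightarrow>
        (\<exists>p. is_path E p \<and> set p = V \<and> hd p = x \<and> last p = y))"

definition strongly_connected :: "'a set \<Rightarrow> ('a \<times> 'a) set \<Rightarrow> bool" where
  "strongly_connected V E \<longleftrightarrow>
     (\<forall>x\<in>V. \<forall>y\<in>V. \<exists>p. is_path E p \<and> set p \<subseteq> V \<and> hd p = x \<and> last p = y)"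

end

theory Submission
  imports Defs
begin

text \<open>Let H be the part of D outside a longest S-cycle C, and let d be the minimum semidegree of D.
  If a path of H runs from x to y, no edge ab of C has a \<rightarrow> x and y \<rightarrow> b, since otherwise the path
  could be spliced into C between a and b, giving a longer S-cycle. Counting along C gives
  indeg_C x + outdeg_C y \<le> |C|, hence indeg_H x + outdeg_H y \<ge> 2d - |C| \<ge> |H| + k - 2. A
  reachability count shows that this bound for pairs joined by a path already makes H strongly
  connected, so it holds for all pairs. As k \<ge> 3 it is a degree-sum condition
  indeg_H x + outdeg_H y \<ge> |H| + 1, which gives Hamiltonian connectedness (by a Woodall-type
  Hamiltonicity theorem, after letting x take over the in-edges of y) and strong connectivity after
  deleting up to two vertices. Finally, if |C| \<le> d then the closing edge of C could be rerouted
  through H; so |C| > d, which bounds |H|.\<close>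

section \<open>Paths and cycles as vertex lists\<close>

definition path_edges :: "'a list \<Rightarrow> ('a \<times> 'a) set" where
  "path_edges xs = set (zip xs (tl xs))"

definition cycle_edges :: "'a list \<Rightarrow> ('a \<times> 'a) set" where
  "cycle_edges xs = set (zip xs (rotate1 xs))"

lemma path_edges_Nil [simp]: "path_edges [] = {}"
  and path_edges_singleton [simp]: "path_edges [x] = {}"
  and path_edges_Cons_Cons [simp]: "path_edges (x # y # ys) = insert (x, y) (path_edges (y # ys))"
  by (auto simp: path_edges_def)

lemma path_edges_Cons: "ys \<noteq> [] \<Longrightarrow> path_edges (x # ys) = insert (x, hd ys) (path_edges ys)"
  by (cases ys) auto

lemma path_edges_append:
  "xs \<noteq> [] \<Longrightarrow> ys \<noteq> [] \<Longrightarrow>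
   path_edges (xs @ ys) = path_edges xs \<union> path_edges ys \<union> {(last xs, hd ys)}"
  by (induction xs rule: induct_list012) (auto simp: path_edges_Cons)

lemma cycle_edges_conv_path_edges:
  assumes "xs \<noteq> []"
  shows "cycle_edges xs = insert (last xs, hd xs) (path_edges xs)"
proof -
  have "zip (x # ys) (ys @ [z]) = zip (x # ys) ys @ [(last (x # ys), z)]" for x z and ys :: "'a list"
    by (induction ys arbitrary: x) auto
  with assms show ?thesis
    by (cases xs) (auto simp: cycle_edges_def path_edges_def)
qed

lemma path_edges_subset_cycle_edges: "path_edges xs \<subseteq> cycle_edges xs"
  by (cases "xs = []") (auto simp: cycle_edges_conv_path_edges)

lemma cycle_edges_rotate [simp]: "cycle_edges (rotate n xs) = cycle_edges xs"
proof -
  have "zip (rotate1 xs) (rotate1 ys) = rotate1 (zip xs ys)" if "length xs = length ys"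
    for xs ys :: "'a list"
    using that by (cases xs; cases ys) auto
  then have "cycle_edges (rotate1 ys) = cycle_edges ys" for ys :: "'a list"
    unfolding cycle_edges_def by (metis length_rotate1 set_rotate1)
  then show ?thesis by (induction n) (simp_all add: rotate_def)
qed

lemma in_path_edges_iff:
  "(a, b) \<in> path_edges p \<longleftrightarrow> (\<exists>i. Suc i < length p \<and> a = p ! i \<and> b = p ! Suc i)"
  unfolding path_edges_def set_zip by (auto simp: nth_tl less_diff_conv)

lemma in_cycle_edges_iff:
  "(a, b) \<in> cycle_edges c \<longleftrightarrow> (\<exists>i < length c. a = c ! i \<and> b = c ! ((i + 1) mod length c))"
  unfolding cycle_edges_def set_zip by (auto simp: nth_rotate1)

lemma is_path_iff: "is_path E p \<longleftrightarrow> p \<noteq> [] \<and> distinct p \<and> path_edges p \<subseteq> E"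
  unfolding is_path_def subset_iff by (auto simp: in_path_edges_iff)

lemma is_cycle_iff: "is_cycle E c \<longleftrightarrow> 2 \<le> length c \<and> distinct c \<and> cycle_edges c \<subseteq> E"
  unfolding is_cycle_def subset_iff by (auto simp: in_cycle_edges_iff)

lemma is_cycle_rotate [simp]: "is_cycle E (rotate n c) \<longleftrightarrow> is_cycle E c"
  by (simp add: is_cycle_iff)

lemma path_edges_take: "path_edges (take n xs) \<subseteq> path_edges xs"
proof
  fix e assume "e \<in> path_edges (take n xs)"
  then obtain a b i where "e = (a, b)" "Suc i < length (take n xs)"
    "a = take n xs ! i" "b = take n xs ! Suc i"
    by (metis in_path_edges_iff surj_pair)
  then show "e \<in> path_edges xs" by (auto simp: in_path_edges_iff)
qed

lemma path_edges_drop: "path_edges (drop n xs) \<subseteq> path_edges xs"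
  unfolding path_edges_def drop_tl[symmetric] drop_zip[symmetric] by (rule set_drop_subset)

lemma path_edges_append_left: "path_edges xs \<subseteq> path_edges (xs @ ys)"
  using path_edges_take[of "length xs" "xs @ ys"] by simp

lemma is_path_take: "is_path E p \<Longrightarrow> 0 < n \<Longrightarrow> is_path E (take n p)"
  using path_edges_take[of n p] by (auto simp: is_path_iff)

lemma is_path_drop: "is_path E p \<Longrightarrow> n < length p \<Longrightarrow> is_path E (drop n p)"
  using path_edges_drop[of n p] by (auto simp: is_path_iff)

lemma is_path_mono: "is_path E p \<Longrightarrow> E \<subseteq> E' \<Longrightarrow> is_path E' p"
  by (auto simp: is_path_iff)

lemma is_cycle_imp_is_path: "is_cycle E c \<Longrightarrow> is_path E c"
  using path_edges_subset_cycle_edges[of c] by (auto simp: is_path_iff is_cycle_iff)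

lemma is_cycle_append_path:
  assumes "is_path E xs" "is_path E ys" "set xs \<inter> set ys = {}"
    and "(last xs, hd ys) \<in> E" "(last ys, hd xs) \<in> E"
  shows "is_cycle E (xs @ ys)"
proof -
  have ne: "xs \<noteq> []" "ys \<noteq> []" using assms(1,2) by (auto simp: is_path_iff)
  then have "2 \<le> length (xs @ ys)" by (cases xs; cases ys) auto
  moreover have "cycle_edges (xs @ ys) \<subseteq> E"
    using assms ne by (auto simp: cycle_edges_conv_path_edges path_edges_append is_path_iff)
  ultimately show ?thesis using assms(1-3) by (auto simp: is_cycle_iff is_path_iff)
qed

lemma is_cycle_subset:
  assumes "is_cycle E c" "E \<subseteq> V \<times> V"
  shows "set c \<subseteq> V"
proof
  fix v assume "v \<in> set c"
  then obtain i where "i < length c" "v = c ! i" by (auto simp: in_set_conv_nth)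
  with assms show "v \<in> V" unfolding is_cycle_def by blast
qed

lemma digraph_cycle_subset: "digraph V F \<Longrightarrow> is_cycle F c \<Longrightarrow> set c \<subseteq> V"
  by (simp add: digraph_def is_cycle_subset)

lemma path_edges_hd_notin:
  assumes "distinct c" "(a, b) \<in> path_edges c"
  shows "b \<noteq> hd c"
proof -
  obtain i where "Suc i < length c" "b = c ! Suc i"
    using assms(2) by (auto simp: in_path_edges_iff)
  moreover have "hd c = c ! 0" using \<open>Suc i < length c\<close> by (cases c) auto
  moreover have "c ! Suc i \<noteq> c ! 0"
    using nth_eq_iff_index_eq[OF assms(1) \<open>Suc i < length c\<close>, of 0] \<open>Suc i < length c\<close>
    by (cases "c = []") auto
  ultimately show ?thesis by simp
qed

lemma rotate_to_cycle_edge: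
  assumes "(a, b) \<in> cycle_edges c"
  shows "\<exists>j. last (rotate j c) = a \<and> hd (rotate j c) = b"
proof -
  obtain i where i: "i < length c" "a = c ! i" "b = c ! ((i + 1) mod length c)"
    using assms unfolding in_cycle_edges_iff by blast
  define r where "r = Suc i" \<comment> \<open>kept opaque so that \<open>rotate_Suc\<close> does not fire\<close>
  have ne: "rotate r c \<noteq> []" using i(1) by auto
  have "last (rotate r c) = c ! ((r + (length c - 1)) mod length c)"
    using ne by (simp add: last_conv_nth nth_rotate)
  also have "r + (length c - 1) = i + length c" using i(1) by (simp add: r_def)
  finally have "last (rotate r c) = a" using i by simp
  moreover have "hd (rotate r c) = b"
    using i ne by (simp add: hd_rotate_conv_nth r_def del: rotate_Suc)
  ultimately show ?thesis by blast
qed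

lemma rotate_to_hd: "v \<in> set c \<Longrightarrow> \<exists>j. hd (rotate j c) = v"
  by (metis hd_rotate_conv_nth in_set_conv_nth list.size(3) mod_less not_less_zero)

lemma rotate_rotate_to: "\<exists>t. rotate t (rotate j xs) = rotate i xs"
proof (cases "xs = []")
  case False
  then have "j \<le> length xs * j" by (cases xs) auto
  then have "rotate (i + length xs * j - j) (rotate j xs) = rotate (i + length xs * j) xs"
    by (metis rotate_rotate le_add_diff_inverse2 trans_le_add2)
  also have "\<dots> = rotate i xs" by (metis rotate_conv_mod mod_mult_self2)
  finally show ?thesis by blast
qed simp

section \<open>Splicing paths into cycles\<close>

definition insertable :: "('a \<times> 'a) set \<Rightarrow> 'a list \<Rightarrow> 'a \<Rightarrow> bool" where
  "insertable E c v \<longleftrightarrow> (\<exists>(a, b) \<in> cycle_edges c. (a, v) \<in> E \<and> (v, b) \<in> E)"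

lemma insertable_rotate [simp]: "insertable E (rotate n c) v \<longleftrightarrow> insertable E c v"
  by (simp add: insertable_def)

lemma insertable_append:
  assumes "insertable E c w" "c \<noteq> []" "(w, hd c) \<notin> E"
  shows "insertable E (c @ q) w"
proof -
  obtain a b where ab: "(a, b) \<in> cycle_edges c" "(a, w) \<in> E" "(w, b) \<in> E"
    using assms(1) by (auto simp: insertable_def)
  then have "(a, b) \<in> path_edges c" using assms(2,3) by (auto simp: cycle_edges_conv_path_edges)
  then have "(a, b) \<in> cycle_edges (c @ q)"
    using path_edges_append_left path_edges_subset_cycle_edges by blast
  with ab show ?thesis by (auto simp: insertable_def)
qed

lemma is_cycle_absorb_path:
  assumes "is_cycle E c" "distinct q" "path_edges q \<subseteq> E" "set q \<inter> set c = {}"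
    and "\<forall>v \<in> set q. insertable E c v"
  shows "\<exists>c'. is_cycle E c' \<and> set c' = set c \<union> set q"
  using assms
proof (induction "length q" arbitrary: c q rule: less_induct)
  case less
  show ?case
  proof (cases q)
    case Nil
    with less.prems show ?thesis by auto
  next
    case (Cons v qs)
    then obtain a b where ab: "(a, b) \<in> cycle_edges c" "(a, v) \<in> E" "(v, b) \<in> E"
      using less.prems(5) unfolding insertable_def by auto
    obtain j where j: "last (rotate j c) = a" "hd (rotate j c) = b"
      using rotate_to_cycle_edge[OF ab(1)] by blast
    define c0 where "c0 = rotate j c"
    have c0: "is_cycle E c0" "c0 \<noteq> []" "set c0 = set c" "last c0 = a" "hd c0 = b"
      using less.prems(1) j by (auto simp: c0_def is_cycle_iff)
    txt \<open>Splice in the longest prefix of q whose last vertex still has an edge back to b.\<close>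
    define M where "M = {i. i < length q \<and> (q ! i, b) \<in> E}"
    have "0 \<in> M" "finite M" using Cons ab by (auto simp: M_def)
    then have max_M: "Max M \<in> M" "\<And>i. i \<in> M \<Longrightarrow> i \<le> Max M"
      using Max_in by auto
    define l where "l = Suc (Max M)"
    define q1 where "q1 = take l q"
    define q2 where "q2 = drop l q"
    have q: "q = q1 @ q2" by (simp add: q1_def q2_def)
    have l: "0 < l" "l \<le> length q" using max_M by (auto simp: l_def M_def)
    have "is_path E q" using less.prems(2,3) Cons by (simp add: is_path_iff)
    then have q1: "is_path E q1" "hd q1 = v" "(last q1, b) \<in> E"
      using l Cons max_M(1)
      by (auto simp: q1_def is_path_take) (auto simp: l_def M_def last_conv_nth)
    have cycle: "is_cycle E (c0 @ q1)"
      using is_cycle_append_path[OF is_cycle_imp_is_path[OF c0(1)] q1(1)]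
        less.prems(4) c0 q1 ab by (auto simp: q)
    have inserts: "\<forall>w \<in> set q2. insertable E (c0 @ q1) w"
    proof
      fix w assume w: "w \<in> set q2"
      have "(w, b) \<notin> E"
      proof
        assume "(w, b) \<in> E"
        obtain s where "l \<le> s" "s < length q" "q ! s = w"
          using w by (auto simp: q2_def in_set_conv_nth) (metis le_add1 less_diff_conv add.commute)
        with \<open>(w, b) \<in> E\<close> have "s \<in> M" "Max M < s" by (simp_all add: M_def l_def)
        with max_M(2) show False by fastforce
      qed
      moreover have "insertable E c0 w" using less.prems(5) w by (simp add: c0_def q)
      ultimately show "insertable E (c0 @ q1) w" using insertable_append c0 by metis
    qed
    have "length q2 < length q" using l by (simp add: q2_def)
    moreover have "distinct q2" "set q2 \<inter> set (c0 @ q1) = {}"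
      using less.prems(2,4) c0(3) unfolding q by auto
    moreover have "path_edges q2 \<subseteq> E"
      using less.prems(3) path_edges_drop[of l q] by (simp add: q2_def)
    ultimately obtain c' where "is_cycle E c'" "set c' = set (c0 @ q1) \<union> set q2"
      using less.hyps[OF _ cycle _ _ _ inserts] by blast
    then show ?thesis using c0(3) q by auto
  qed
qed

lemma is_S_cycle_rotate:
  assumes "is_S_cycle E S C"
  shows "is_S_cycle E S (rotate j C)"
proof -
  obtain i where "subseq S (rotate i C)" using assms by (auto simp: is_S_cycle_def)
  moreover obtain t where "rotate t (rotate j C) = rotate i C" using rotate_rotate_to by blast
  ultimately show ?thesis using assms by (metis is_S_cycle_def is_cycle_rotate)
qed

lemma subseq_rotate_append:
  assumes "subseq S (rotate t xs)"
  shows "\<exists>t'. subseq S (rotate t' (xs @ ys))"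
proof (cases "xs = []")
  case False
  define r where "r = t mod length xs"
  then have "r < length xs" using False by simp
  then have "rotate r (xs @ ys) = drop r xs @ ys @ take r xs"
    by (simp add: rotate_drop_take)
  moreover have "rotate t xs = drop r xs @ take r xs" by (simp add: rotate_drop_take r_def)
  moreover have "subseq (drop r xs @ take r xs) (drop r xs @ ys @ take r xs)"
    by (intro list_emb_append_mono list_emb_append2) auto
  ultimately show ?thesis using assms by (metis subseq_order.order_trans)
qed (use assms list_emb_Nil2 in fastforce)

lemma is_S_cycle_insert_path:
  assumes SC: "is_S_cycle E S C" and ab: "(a, b) \<in> cycle_edges C" and P: "is_path E P"
    and "set P \<inter> set C = {}" "(a, hd P) \<in> E" "(last P, b) \<in> E"
  shows "\<exists>C'. is_S_cycle E S C' \<and> length C' = length C + length P"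
proof -
  obtain j where j: "last (rotate j C) = a" "hd (rotate j C) = b"
    using rotate_to_cycle_edge[OF ab] by blast
  define C0 where "C0 = rotate j C"
  have "is_S_cycle E S C0" using is_S_cycle_rotate[OF SC] by (simp add: C0_def)
  then obtain t where C0: "is_cycle E C0" "subseq S (rotate t C0)" by (auto simp: is_S_cycle_def)
  then obtain t' where "subseq S (rotate t' (C0 @ P))" using subseq_rotate_append by blast
  moreover have "is_cycle E (C0 @ P)"
    using is_cycle_append_path[OF is_cycle_imp_is_path[OF C0(1)] P] assms j
    by (auto simp: C0_def)
  ultimately show ?thesis by (intro exI[of _ "C0 @ P"]) (auto simp: is_S_cycle_def C0_def)
qed

section \<open>Counting neighbours\<close>

lemma indeg_insert:
  "finite B \<Longrightarrow> a \<notin> B \<Longrightarrow> indeg (insert a B) E x = of_bool ((a, x) \<in> E) + indeg B E x"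
  unfolding indeg_def
  by (cases "(a, x) \<in> E") (auto simp: insert_compr[symmetric] Collect_conj_eq intro!: card_insert_disjoint)

lemma outdeg_insert:
  "finite B \<Longrightarrow> a \<notin> B \<Longrightarrow> outdeg (insert a B) E x = of_bool ((x, a) \<in> E) + outdeg B E x"
  unfolding outdeg_def
  by (cases "(x, a) \<in> E") (auto simp: insert_compr[symmetric] Collect_conj_eq intro!: card_insert_disjoint)

lemma indeg_empty [simp]: "indeg {} E x = 0"
  and outdeg_empty [simp]: "outdeg {} E x = 0"
  by (simp_all add: indeg_def outdeg_def)

lemma indeg_Un:
  "finite A \<Longrightarrow> finite B \<Longrightarrow> A \<inter> B = {} \<Longrightarrow> indeg (A \<union> B) E x = indeg A E x + indeg B E x"
  unfolding indeg_def by (subst card_Un_disjoint[symmetric]) (auto intro: arg_cong[where f = card])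

lemma outdeg_Un:
  "finite A \<Longrightarrow> finite B \<Longrightarrow> A \<inter> B = {} \<Longrightarrow> outdeg (A \<union> B) E x = outdeg A E x + outdeg B E x"
  unfolding outdeg_def by (subst card_Un_disjoint[symmetric]) (auto intro: arg_cong[where f = card])

lemma indeg_split: "finite V \<Longrightarrow> A \<subseteq> V \<Longrightarrow> indeg V E x = indeg A E x + indeg (V - A) E x"
  and outdeg_split: "finite V \<Longrightarrow> A \<subseteq> V \<Longrightarrow> outdeg V E x = outdeg A E x + outdeg (V - A) E x"
  using indeg_Un[of A "V - A" E x] outdeg_Un[of A "V - A" E x]
  by (simp_all add: Un_absorb1 finite_subset)

lemma indeg_less_card:
  assumes "finite A" "x \<in> A" "(x, x) \<notin> E" "{v \<in> W. (v, x) \<in> E} \<subseteq> A"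
  shows "indeg W E x < card A"
proof -
  have "indeg W E x \<le> card (A - {x})"
    unfolding indeg_def using assms by (intro card_mono) auto
  also have "\<dots> < card A" using assms(1,2) by (rule card_Diff1_less)
  finally show ?thesis .
qed

lemma outdeg_less_card:
  assumes "finite A" "x \<in> A" "(x, x) \<notin> E" "{v \<in> W. (x, v) \<in> E} \<subseteq> A"
  shows "outdeg W E x < card A"
proof -
  have "outdeg W E x \<le> card (A - {x})"
    unfolding outdeg_def using assms by (intro card_mono) auto
  also have "\<dots> < card A" using assms(1,2) by (rule card_Diff1_less)
  finally show ?thesis .
qed

lemma indeg_plus_outdeg_le_card:
  assumes "finite W" "\<forall>w \<in> W. (w, x) \<notin> E \<or> (y, w) \<notin> E"
  shows "indeg W E x + outdeg W E y \<le> card W"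
proof -
  have "indeg W E x + outdeg W E y = card ({w \<in> W. (w, x) \<in> E} \<union> {w \<in> W. (y, w) \<in> E})"
    unfolding indeg_def outdeg_def using assms by (subst card_Un_disjoint) auto
  also have "\<dots> \<le> card W" using assms(1) by (intro card_mono) auto
  finally show ?thesis .
qed

lemma indeg_plus_outdeg_le_double_card:
  assumes "finite W" "x \<in> W" "(x, x) \<notin> F"
  shows "indeg W F x + outdeg W F x + 2 \<le> 2 * card W"
  using indeg_less_card[of W x F W] outdeg_less_card[of W x F W] assms by auto

lemma indeg_plus_outdeg_path:
  assumes "distinct A" "A \<noteq> []" "\<forall>(a, b) \<in> path_edges A. (a, x) \<notin> E \<or> (y, b) \<notin> E"
  shows "indeg (set A) E x + outdeg (set A) E y + 1
    \<le> length A + of_bool ((y, hd A) \<in> E) + of_bool ((last A, x) \<in> E)"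
  using assms
proof (induction A rule: induct_list012)
  case (2 a)
  then show ?case by (simp add: indeg_insert outdeg_insert)
next
  case (3 a b A)
  then have IH: "indeg (set (b # A)) E x + outdeg (set (b # A)) E y + 1
      \<le> length (b # A) + of_bool ((y, b) \<in> E) + of_bool ((last (b # A), x) \<in> E)"
    by simp
  have "a \<notin> set (b # A)" using "3.prems"(1) by simp
  then have "indeg (set (a # b # A)) E x = of_bool ((a, x) \<in> E) + indeg (set (b # A)) E x"
    "outdeg (set (a # b # A)) E y = of_bool ((y, a) \<in> E) + outdeg (set (b # A)) E y"
    using indeg_insert[of "set (b # A)" a E x] outdeg_insert[of "set (b # A)" a E y] by simp_all
  moreover have "(a, x) \<notin> E \<or> (y, b) \<notin> E" using "3.prems"(3) by simp
  ultimately show ?case using IH by (cases "(a, x) \<in> E"; cases "(y, b) \<in> E") auto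
qed simp

lemma indeg_plus_outdeg_path_le:
  assumes "distinct A" "\<forall>(a, b) \<in> path_edges A. (a, x) \<notin> E \<or> (y, b) \<notin> E"
  shows "indeg (set A) E x + outdeg (set A) E y \<le> length A + 1"
proof (cases "A = []")
  case False
  then show ?thesis using indeg_plus_outdeg_path[OF assms(1) False assms(2)]
    by (cases "(y, hd A) \<in> E"; cases "(last A, x) \<in> E") auto
qed simp

lemma indeg_plus_outdeg_cycle_le:
  assumes "distinct A" "\<forall>(a, b) \<in> cycle_edges A. (a, x) \<notin> E \<or> (y, b) \<notin> E"
  shows "indeg (set A) E x + outdeg (set A) E y \<le> length A"
proof (cases "A = []")
  case False
  then have "(last A, x) \<notin> E \<or> (y, hd A) \<notin> E"
    and path: "\<forall>(a, b) \<in> path_edges A. (a, x) \<notin> E \<or> (y, b) \<notin> E"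
    using assms(2) path_edges_subset_cycle_edges[of A]
    by (auto simp: cycle_edges_conv_path_edges)
  then show ?thesis using indeg_plus_outdeg_path[OF assms(1) False path]
    by (cases "(y, hd A) \<in> E"; cases "(last A, x) \<in> E") auto
qed simp

section \<open>Reachability\<close>

lemma rtrancl_induced_edges_imp_path:
  assumes "(x, y) \<in> (induced_edges E W)\<^sup>*" "x \<in> W"
  shows "\<exists>p. is_path E p \<and> set p \<subseteq> W \<and> hd p = x \<and> last p = y"
  using assms(1)
proof (induction rule: rtrancl_induct)
  case base
  then show ?case using assms(2) by (intro exI[of _ "[x]"]) (auto simp: is_path_iff)
next
  case (step y z)
  then obtain p where p: "is_path E p" "set p \<subseteq> W" "hd p = x" "last p = y" by blast
  have z: "z \<in> W" "(y, z) \<in> E" using step(2) by (auto simp: induced_edges_def)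
  show ?case
  proof (cases "z \<in> set p")
    case True
    then obtain i where i: "i < length p" "p ! i = z" by (auto simp: in_set_conv_nth)
    have "is_path E (take (Suc i) p)" using is_path_take[OF p(1), of "Suc i"] by simp
    moreover have "last (take (Suc i) p) = z" using i by (simp add: take_Suc_conv_app_nth)
    moreover have "hd (take (Suc i) p) = x" using p(3) i by (cases p) auto
    moreover have "set (take (Suc i) p) \<subseteq> W" using p(2) set_take_subset by fast
    ultimately show ?thesis by blast
  next
    case False
    then have "is_path E (p @ [z])"
      using p z by (auto simp: is_path_iff path_edges_append)
    with p z show ?thesis by (intro exI[of _ "p @ [z]"]) (auto simp: is_path_iff)
  qed
qed

lemma rtrancl_leaves_set:
  "(a, b) \<in> F\<^sup>* \<Longrightarrow> a \<in> S \<Longrightarrow> b \<notin> S \<Longrightarrow> \<exists>u w. u \<in> S \<and> w \<notin> S \<and> (u, w) \<in> F"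
proof (induction rule: rtrancl_induct)
  case (step y z)
  then show ?case by (cases "y \<in> S") auto
qed simp

lemma rtrancl_enters_set:
  "(a, b) \<in> F\<^sup>* \<Longrightarrow> a \<notin> S \<Longrightarrow> b \<in> S \<Longrightarrow>
   \<exists>w v. (a, w) \<in> (F \<inter> (- S) \<times> (- S))\<^sup>* \<and> w \<notin> S \<and> v \<in> S \<and> (w, v) \<in> F"
proof (induction rule: converse_rtrancl_induct)
  case (step a a')
  show ?case
  proof (cases "a' \<in> S")
    case False
    with step obtain w v where "(a', w) \<in> (F \<inter> (- S) \<times> (- S))\<^sup>*" "w \<notin> S" "v \<in> S" "(w, v) \<in> F"
      by blast
    moreover have "(a, a') \<in> F \<inter> (- S) \<times> (- S)" using step False by auto
    ultimately show ?thesis by (blast intro: converse_rtrancl_into_rtrancl)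
  qed (use step in blast)
qed simp

lemma digraph_induced: "digraph V E \<Longrightarrow> W \<subseteq> V \<Longrightarrow> digraph W (induced_edges E W)"
  by (auto simp: digraph_def induced_edges_def intro: finite_subset)

lemma indeg_induced: "u \<in> W \<Longrightarrow> indeg W (induced_edges E W) u = indeg W E u"
  and outdeg_induced: "u \<in> W \<Longrightarrow> outdeg W (induced_edges E W) u = outdeg W E u"
  unfolding indeg_def outdeg_def induced_edges_def by (auto intro: arg_cong[where f = card])

lemma induced_edges_induced_edges:
  "W' \<subseteq> W \<Longrightarrow> induced_edges (induced_edges E W) W' = induced_edges E W'"
  by (auto simp: induced_edges_def)

text \<open>If x does not reach y, the vertices reached from x and those reaching y are disjoint, and
  each set is larger than the corresponding degree.\<close>

lemma rtrancl_if_degree_sum: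
  assumes D: "digraph W F"
    and deg: "\<And>u v. u \<in> W \<Longrightarrow> v \<in> W \<Longrightarrow> (u, v) \<in> F\<^sup>* \<Longrightarrow>
      card W \<le> indeg W F u + outdeg W F v + 1"
    and x: "x \<in> W" and y: "y \<in> W"
  shows "(x, y) \<in> F\<^sup>*"
proof (rule ccontr)
  define ancestors where "ancestors u = {a \<in> W. (a, u) \<in> F\<^sup>*}" for u
  define descendants where "descendants v = {b \<in> W. (v, b) \<in> F\<^sup>*}" for v
  have fin: "finite W" and loops: "\<And>v. (v, v) \<notin> F" using D by (auto simp: digraph_def)
  have anc: "indeg W F u < card (ancestors u)" if "u \<in> W" for u
    using indeg_less_card[of "ancestors u" u F W] fin that loops by (auto simp: ancestors_def)
  have desc: "outdeg W F v < card (descendants v)" if "v \<in> W" for v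
    using outdeg_less_card[of "descendants v" v F W] fin that loops by (auto simp: descendants_def)
  have disjoint: "card (descendants v) + card (ancestors u) \<le> card W" if "(v, u) \<notin> F\<^sup>*" for u v
  proof -
    have "descendants v \<inter> ancestors u = {}"
      using that by (auto simp: descendants_def ancestors_def intro: rtrancl_trans)
    then have "card (descendants v) + card (ancestors u) = card (descendants v \<union> ancestors u)"
      using fin by (simp add: card_Un_disjoint descendants_def ancestors_def)
    also have "\<dots> \<le> card W" using fin by (intro card_mono) (auto simp: descendants_def ancestors_def)
    finally show ?thesis .
  qed
  assume xy: "(x, y) \<notin> F\<^sup>*"
  show False
  proof (cases "(y, x) \<in> F\<^sup>*")
    case True
    then show False using deg[OF y x True] anc[OF y] desc[OF x] disjoint[OF xy] by linarith
  next
    case False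
    then show False
      using deg[OF x x rtrancl_refl] deg[OF y y rtrancl_refl] anc[OF x] anc[OF y]
        desc[OF x] desc[OF y] disjoint[OF xy] disjoint[OF False] by linarith
  qed
qed

section \<open>Hamiltonian cycles from degree sums\<close>

lemma is_cycle_length_eq_card: "is_cycle F c \<Longrightarrow> length c = card (set c)"
  by (simp add: is_cycle_iff distinct_card)

lemma card_eq_cycle_length_plus_card_Diff:
  assumes "digraph V E" "is_cycle E C"
  shows "card V = length C + card (V - set C)"
proof -
  have "set C \<subseteq> V" "finite V" using assms digraph_cycle_subset by (auto simp: digraph_def)
  then show ?thesis
    using is_cycle_length_eq_card[OF assms(2)] card_Diff_subset[of "set C" V] card_mono[of V "set C"]
    by (simp add: finite_subset)
qed

lemma longest_cycle_exists:
  assumes D: "digraph V F" and c: "is_cycle F c"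
  shows "\<exists>C. is_cycle F C \<and> (\<forall>C'. is_cycle F C' \<longrightarrow> length C' \<le> length C)"
proof (rule Lattices_Big.ex_has_greatest_nat[of "is_cycle F" c length "Suc (card V)"],
    fact c, intro allI impI)
  fix C' assume "is_cycle F C'"
  moreover from this have "set C' \<subseteq> V" by (rule digraph_cycle_subset[OF D])
  ultimately show "length C' < Suc (card V)"
    using D by (simp add: is_cycle_length_eq_card card_mono digraph_def le_imp_less_Suc)
qed

lemma longest_cycle_not_insertable:
  assumes C: "is_cycle F C" and longest: "\<forall>C'. is_cycle F C' \<longrightarrow> length C' \<le> length C"
    and z: "z \<notin> set C"
  shows "\<not> insertable F C z"
proof
  assume "insertable F C z"
  then obtain C' where "is_cycle F C'" "set C' = insert z (set C)"
    using is_cycle_absorb_path[OF C, of "[z]"] z by auto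
  moreover have "card (insert z (set C)) = Suc (length C)"
    using C z by (simp add: is_cycle_length_eq_card)
  ultimately show False using longest by (fastforce simp: is_cycle_length_eq_card)
qed

text \<open>The cycle C, rotated, splits into consecutive arcs A and G, and the path Y through R leaves
  C at the end of A and returns to the start of A, skipping G.\<close>

definition bypass ::
  "('a \<times> 'a) set \<Rightarrow> 'a list \<Rightarrow> 'a set \<Rightarrow> 'a list \<Rightarrow> 'a list \<Rightarrow> 'a list \<Rightarrow> bool" where
  "bypass F C R A G Y \<longleftrightarrow> (\<exists>j. rotate j C = A @ G) \<and> A \<noteq> [] \<and> is_path F Y \<and> set Y \<subseteq> R
     \<and> (last A, hd Y) \<in> F \<and> (last Y, hd A) \<in> F"

lemma bypass_exists:
  assumes D: "digraph V F" and strong: "\<forall>x \<in> V. \<forall>y \<in> V. (x, y) \<in> F\<^sup>*"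
    and C: "is_cycle F C" and nonspanning: "set C \<noteq> V"
  shows "\<exists>A G Y. bypass F C (V - set C) A G Y"
proof -
  have CV: "set C \<subseteq> V" using digraph_cycle_subset[OF D C] .
  obtain r where r: "r \<in> V" "r \<notin> set C" using CV nonspanning by blast
  obtain c where c: "c \<in> set C" using C by (cases C) (auto simp: is_cycle_iff)
  have "(c, r) \<in> F\<^sup>*" using strong c CV r by blast
  then obtain u w where uw: "u \<in> set C" "w \<notin> set C" "(u, w) \<in> F"
    using rtrancl_leaves_set c r by metis
  then have "w \<in> V" using D by (auto simp: digraph_def)
  then have "(w, c) \<in> F\<^sup>*" using strong c CV by blast
  then obtain w' v where w'v: "(w, w') \<in> (F \<inter> (- set C) \<times> (- set C))\<^sup>*" "v \<in> set C" "(w', v) \<in> F"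
    using rtrancl_enters_set uw(2) c by metis
  have "F \<inter> (- set C) \<times> (- set C) = induced_edges F (V - set C)"
    using D by (auto simp: induced_edges_def digraph_def)
  then obtain Y where Y: "is_path F Y" "set Y \<subseteq> V - set C" "hd Y = w" "last Y = w'"
    using rtrancl_induced_edges_imp_path[of w w' F "V - set C"] w'v(1) uw(2) \<open>w \<in> V\<close> by auto
  obtain j where j: "hd (rotate j C) = v" using rotate_to_hd[OF w'v(2)] by blast
  have "u \<in> set (rotate j C)" using uw(1) by simp
  then obtain i where i: "i < length (rotate j C)" "rotate j C ! i = u"
    unfolding in_set_conv_nth by blast
  define A where "A = take (Suc i) (rotate j C)"
  have "A \<noteq> []" "last A = u"
    using i by (auto simp: A_def take_Suc_conv_app_nth)
  moreover have "hd A = v" using j by (simp add: A_def hd_take)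
  moreover have "rotate j C = A @ drop (Suc i) (rotate j C)" by (simp add: A_def)
  ultimately have "bypass F C (V - set C) A (drop (Suc i) (rotate j C)) Y"
    using Y uw(3) w'v(3) unfolding bypass_def by metis
  then show ?thesis by blast
qed

lemma bypass_rotation:
  assumes "bypass F C R A G Y" "is_cycle F C"
  shows "is_cycle F (A @ G)" "set A \<union> set G = set C" "length A + length G = length C"
    "cycle_edges (A @ G) = cycle_edges C"
proof -
  obtain j where j: "rotate j C = A @ G" using assms(1) by (auto simp: bypass_def)
  from assms(2) show "is_cycle F (A @ G)" by (simp flip: j)
  show "set A \<union> set G = set C" "length A + length G = length C"
    "cycle_edges (A @ G) = cycle_edges C"
    using j by (metis set_append set_rotate, metis length_append length_rotate,
        metis cycle_edges_rotate)
qed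

lemma bypass_partition:
  assumes D: "digraph V F" and C: "is_cycle F C" and bp: "bypass F C (V - set C) A G Y"
  shows "indeg V F x = indeg (set A) F x + indeg (set G) F x + indeg (set Y) F x
      + indeg (V - set C - set Y) F x"
    and "outdeg V F x = outdeg (set A) F x + outdeg (set G) F x + outdeg (set Y) F x
      + outdeg (V - set C - set Y) F x"
    and "card V = length A + length G + length Y + card (V - set C - set Y)"
proof -
  define W where "W = V - set C - set Y"
  have fin: "finite V" "finite W" using D by (simp_all add: digraph_def W_def)
  have AG: "distinct (A @ G)" "set A \<union> set G = set C"
    using bypass_rotation[OF bp C] by (auto simp: is_cycle_iff)
  have Y: "distinct Y" "set Y \<subseteq> V - set C" using bp by (auto simp: bypass_def is_path_iff)
  have V: "V = set A \<union> (set G \<union> (set Y \<union> W))"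
    using AG(2) digraph_cycle_subset[OF D C] Y(2) by (auto simp: W_def)
  have disjoint: "set A \<inter> (set G \<union> (set Y \<union> W)) = {}" "set G \<inter> (set Y \<union> W) = {}"
    "set Y \<inter> W = {}"
    using AG Y(2) by (auto simp: W_def)
  have "indeg V F x = indeg (set A) F x + indeg (set G) F x + indeg (set Y) F x + indeg W F x"
    "outdeg V F x = outdeg (set A) F x + outdeg (set G) F x + outdeg (set Y) F x + outdeg W F x"
    "card V = length A + length G + length Y + card W"
    unfolding V using fin(2) disjoint AG(1) Y(1)
    by (simp_all add: indeg_Un outdeg_Un card_Un_disjoint distinct_card)
  then show "indeg V F x = indeg (set A) F x + indeg (set G) F x + indeg (set Y) F x
      + indeg (V - set C - set Y) F x"
    "outdeg V F x = outdeg (set A) F x + outdeg (set G) F x + outdeg (set Y) F x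
      + outdeg (V - set C - set Y) F x"
    "card V = length A + length G + length Y + card (V - set C - set Y)"
    by (simp_all add: W_def)
qed

text \<open>Shortcutting C through the bypass gives a cycle, which is not longer than C; so the skipped
  arc G cannot be absorbed completely.\<close>

lemma longest_cycle_bypass_gap:
  assumes C: "is_cycle F C" and longest: "\<forall>C'. is_cycle F C' \<longrightarrow> length C' \<le> length C"
    and bp: "bypass F C R A G Y" and R: "R \<inter> set C = {}"
  shows "\<exists>u \<in> set G. \<not> insertable F (A @ Y) u"
proof (rule ccontr)
  assume "\<not> ?thesis"
  then have inserts: "\<forall>g \<in> set G. insertable F (A @ Y) g" by blast
  note AG = bypass_rotation[OF bp C]
  have A: "is_path F A"
    using is_path_take[OF is_cycle_imp_is_path[OF AG(1)], of "length A"] bp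
    by (auto simp: bypass_def)
  have Y: "is_path F Y" "set Y \<inter> set C = {}" using bp R by (auto simp: bypass_def)
  have cycle_AY: "is_cycle F (A @ Y)"
    using is_cycle_append_path[OF A Y(1)] bp AG(2) Y(2) by (auto simp: bypass_def)
  have G: "distinct G" "path_edges G \<subseteq> F" "set G \<inter> set (A @ Y) = {}"
    using AG(1,2) path_edges_drop[of "length A" "A @ G"] path_edges_subset_cycle_edges[of "A @ G"]
      Y(2) by (auto simp: is_cycle_iff)
  obtain c where c: "is_cycle F c" "set c = set (A @ Y) \<union> set G"
    using is_cycle_absorb_path[OF cycle_AY G(1,2)] G(3) inserts by blast
  then have "length c = length (A @ Y) + length G"
    using G is_cycle_length_eq_card[OF cycle_AY]
    by (simp add: is_cycle_length_eq_card card_Un_disjoint Int_commute distinct_card)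
  moreover have "length c \<le> length C" using longest c(1) by blast
  moreover have "0 < length Y" using Y(1) by (simp add: is_path_iff)
  ultimately show False using AG(3) by simp
qed

context
  fixes F :: "('a \<times> 'a) set" and C A G Y :: "'a list" and R :: "'a set"
  assumes bypass: "bypass F C R A G Y"
    and minimal: "\<forall>A' G' Y'. bypass F C R A' G' Y' \<longrightarrow> length G \<le> length G'"
begin

lemma bypass_arcs: "\<exists>j. rotate j C = A @ G"
  and bypass_A_ne: "A \<noteq> []"
  and bypass_path: "is_path F Y"
  and bypass_path_subset: "set Y \<subseteq> R"
  and bypass_leave: "(last A, hd Y) \<in> F"
  and bypass_return: "(last Y, hd A) \<in> F"
  using bypass by (simp_all add: bypass_def)

lemma bypass_rotate_split:
  assumes "G = G1 @ g # G2"
  shows "\<exists>j. rotate j C = (A @ G1 @ [g]) @ G2" "\<exists>j. rotate j C = (g # G2 @ A) @ G1"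
proof -
  obtain j where j: "rotate j C = A @ G" using bypass_arcs by blast
  then show "\<exists>j. rotate j C = (A @ G1 @ [g]) @ G2" using assms by auto
  have "rotate (length (A @ G1) + j) C = rotate (length (A @ G1)) ((A @ G1) @ (g # G2))"
    using j assms by (simp add: rotate_rotate[symmetric])
  also have "\<dots> = (g # G2 @ A) @ G1" using rotate_append[of "A @ G1" "g # G2"] by simp
  finally show "\<exists>j. rotate j C = (g # G2 @ A) @ G1" by blast
qed

lemma minimal_bypass_no_edge_to_path:
  assumes g: "g \<in> set G" and v: "v \<in> set Y"
  shows "(g, v) \<notin> F"
proof
  assume gv: "(g, v) \<in> F"
  obtain G1 G2 where G: "G = G1 @ g # G2" using split_list[OF g] by blast
  obtain Y1 Y2 where Y: "Y = Y1 @ v # Y2" using split_list[OF v] by blast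
  have "is_path F (v # Y2)"
    using is_path_drop[OF bypass_path, of "length Y1"] Y by simp
  then have "bypass F C R (A @ G1 @ [g]) G2 (v # Y2)"
    using bypass_rotate_split(1)[OF G] gv bypass_path_subset bypass_return bypass_A_ne Y
    by (auto simp: bypass_def)
  then show False using minimal G by fastforce
qed

lemma minimal_bypass_no_edge_from_path:
  assumes g: "g \<in> set G" and v: "v \<in> set Y"
  shows "(v, g) \<notin> F"
proof
  assume vg: "(v, g) \<in> F"
  obtain G1 G2 where G: "G = G1 @ g # G2" using split_list[OF g] by blast
  obtain Y1 Y2 where Y: "Y = Y1 @ v # Y2" using split_list[OF v] by blast
  have "is_path F (Y1 @ [v])"
    using is_path_take[OF bypass_path, of "Suc (length Y1)"] Y by simp
  moreover have "hd (Y1 @ [v]) = hd Y" using Y by (cases Y1) auto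
  ultimately have "bypass F C R (g # G2 @ A) G1 (Y1 @ [v])"
    using bypass_rotate_split(2)[OF G] vg bypass_path_subset bypass_leave bypass_A_ne Y
    by (auto simp: bypass_def)
  then show False using minimal G by fastforce
qed

lemma minimal_bypass_no_detour_to_gap:
  assumes g: "g \<in> set G" and w: "w \<in> R" "w \<notin> set Y" and "(hd Y, w) \<in> F"
  shows "(w, g) \<notin> F"
proof
  assume wg: "(w, g) \<in> F"
  obtain G1 G2 where G: "G = G1 @ g # G2" using split_list[OF g] by blast
  have "hd Y \<in> set Y" using bypass_path by (auto simp: is_path_iff)
  then have "is_path F [hd Y, w]" using assms by (auto simp: is_path_iff)
  then have "bypass F C R (g # G2 @ A) G1 [hd Y, w]"
    using bypass_rotate_split(2)[OF G] assms wg bypass_path_subset bypass_leave bypass_A_ne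
      \<open>hd Y \<in> set Y\<close> by (auto simp: bypass_def)
  then show False using minimal G by fastforce
qed

lemma minimal_bypass_no_detour_from_gap:
  assumes g: "g \<in> set G" and w: "w \<in> R" "w \<notin> set Y" and "(g, w) \<in> F"
  shows "(w, hd Y) \<notin> F"
proof
  assume wy: "(w, hd Y) \<in> F"
  obtain G1 G2 where G: "G = G1 @ g # G2" using split_list[OF g] by blast
  have "is_path F (w # Y)"
    using bypass_path wy w by (auto simp: is_path_iff path_edges_Cons)
  then have "bypass F C R (A @ G1 @ [g]) G2 (w # Y)"
    using bypass_rotate_split(1)[OF G] assms bypass_path_subset bypass_return bypass_A_ne bypass_path
    by (auto simp: bypass_def is_path_iff)
  then show False using minimal G by fastforce
qed

lemma minimal_bypass_degree_sum:
  assumes D: "digraph V F" and C: "is_cycle F C"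
    and longest: "\<forall>C'. is_cycle F C' \<longrightarrow> length C' \<le> length C"
    and R: "R = V - set C"
    and u: "u \<in> set G" "\<not> insertable F (A @ Y) u"
  shows "indeg V F u + outdeg V F u + indeg V F (hd Y) + outdeg V F (hd Y) + 2 \<le> 2 * card V"
proof -
  define y where "y = hd Y"
  define W where "W = V - set C - set Y"
  note AG = bypass_rotation[OF bypass C]
  have loops: "\<And>v. (v, v) \<notin> F" and "finite W" using D by (auto simp: digraph_def W_def)
  have "distinct Y" "y \<in> set Y" using bypass_path by (auto simp: y_def is_path_iff)
  moreover from this have "y \<notin> set C" using bypass_path_subset R by auto
  ultimately have Y: "distinct Y" "y \<in> set Y" "y \<notin> set C" by blast+
  have "distinct A" "distinct G" using AG(1) by (simp_all add: is_cycle_iff)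
  have "\<forall>(a, b) \<in> path_edges A. (a, u) \<notin> F \<or> (u, b) \<notin> F"
    using u(2) path_edges_append_left[of A Y] path_edges_subset_cycle_edges[of "A @ Y"]
    by (auto simp: insertable_def)
  moreover have "\<forall>(a, b) \<in> cycle_edges C. (a, y) \<notin> F \<or> (y, b) \<notin> F"
    using longest_cycle_not_insertable[OF C longest Y(3)] by (auto simp: insertable_def)
  then have "\<forall>(a, b) \<in> path_edges A. (a, y) \<notin> F \<or> (y, b) \<notin> F"
    using path_edges_append_left[of A G] path_edges_subset_cycle_edges[of "A @ G"] AG(4)
    by blast
  ultimately have on_A: "indeg (set A) F u + outdeg (set A) F u \<le> length A + 1"
    "indeg (set A) F y + outdeg (set A) F y \<le> length A + 1"
    using indeg_plus_outdeg_path_le[OF \<open>distinct A\<close>] by blast+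
  have no_edges: "(g, v) \<notin> F" "(v, g) \<notin> F" if "g \<in> set G" "v \<in> set Y" for g v
    using minimal_bypass_no_edge_to_path minimal_bypass_no_edge_from_path that by blast+
  have on_G: "indeg (set G) F u < length G" "outdeg (set G) F u < length G"
    "indeg (set G) F y = 0" "outdeg (set G) F y = 0"
    using indeg_less_card[of "set G" u F "set G"] outdeg_less_card[of "set G" u F "set G"]
      u(1) loops \<open>distinct G\<close> no_edges Y(2)
    by (simp_all add: indeg_def outdeg_def distinct_card)
  have on_Y: "indeg (set Y) F y < length Y" "outdeg (set Y) F y < length Y"
    "indeg (set Y) F u = 0" "outdeg (set Y) F u = 0"
    using indeg_less_card[of "set Y" y F "set Y"] outdeg_less_card[of "set Y" y F "set Y"]
      Y(1,2) loops no_edges u(1)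
    by (simp_all add: indeg_def outdeg_def distinct_card)
  have "\<forall>w \<in> W. (w, u) \<notin> F \<or> (y, w) \<notin> F" "\<forall>w \<in> W. (w, y) \<notin> F \<or> (u, w) \<notin> F"
    using u(1) minimal_bypass_no_detour_to_gap minimal_bypass_no_detour_from_gap R
    by (auto simp: W_def y_def)
  then have on_W: "indeg W F u + outdeg W F y \<le> card W" "indeg W F y + outdeg W F u \<le> card W"
    using indeg_plus_outdeg_le_card[OF \<open>finite W\<close>] by blast+
  note partition = bypass_partition[OF D C bypass[unfolded R]]
  show ?thesis
    using partition(1)[of u] partition(1)[of y] partition(2)[of u] partition(2)[of y]
      partition(3) on_A on_G on_Y on_W
    unfolding W_def y_def by linarith
qed

end

lemma two_cycle_if_degree_sum:
  assumes D: "digraph V F" and x: "x \<in> V" and deg: "card V \<le> indeg V F x + outdeg V F x"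
  shows "\<exists>z. is_cycle F [x, z]"
proof -
  have fin: "finite V" and loops: "\<And>v. (v, v) \<notin> F" using D by (auto simp: digraph_def)
  have "indeg V F x = indeg (V - {x}) F x" "outdeg V F x = outdeg (V - {x}) F x"
    using indeg_insert[of "V - {x}" x F x] outdeg_insert[of "V - {x}" x F x] fin loops x
    by (simp_all add: insert_absorb)
  moreover have "card (V - {x}) < card V" using fin x by (rule card_Diff1_less)
  ultimately have "\<not> (\<forall>w \<in> V - {x}. (w, x) \<notin> F \<or> (x, w) \<notin> F)"
    using indeg_plus_outdeg_le_card[of "V - {x}" x F x] fin deg by auto
  then obtain z where "z \<in> V - {x}" "(z, x) \<in> F" "(x, z) \<in> F" by blast
  then show ?thesis by (auto simp: is_cycle_iff cycle_edges_conv_path_edges)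
qed

text \<open>A weak form of Woodall's theorem. If a longest cycle C is not Hamiltonian, take a bypass of
  C whose skipped arc G is as short as possible; a vertex of G that cannot be inserted into the
  shortcut cycle and the first vertex of the bypass together have too few edges.\<close>

theorem hamiltonian_cycle_if_degree_sum:
  assumes D: "digraph V F" and two: "2 \<le> card V"
    and deg: "\<forall>u \<in> V. \<forall>v \<in> V. card V \<le> indeg V F u + outdeg V F v"
  shows "\<exists>c. is_cycle F c \<and> set c = V"
proof (rule ccontr)
  assume nonham: "\<nexists>c. is_cycle F c \<and> set c = V"
  obtain x where "x \<in> V" using two by fastforce
  then obtain z where "is_cycle F [x, z]" using two_cycle_if_degree_sum[OF D] deg by blast
  then obtain C where C: "is_cycle F C" and longest: "\<forall>C'. is_cycle F C' \<longrightarrow> length C' \<le> length C"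
    using longest_cycle_exists[OF D] by blast
  have strong: "\<forall>x \<in> V. \<forall>y \<in> V. (x, y) \<in> F\<^sup>*"
    using rtrancl_if_degree_sum[OF D] deg by fastforce
  have "set C \<noteq> V" using C nonham by blast
  then obtain A G Y where "bypass F C (V - set C) A G Y"
    using bypass_exists[OF D strong C] by blast
  then obtain A G Y where bp: "bypass F C (V - set C) A G Y"
    and minimal: "\<forall>A' G' Y'. bypass F C (V - set C) A' G' Y' \<longrightarrow> length G \<le> length G'"
    using ex_has_least_nat[where P = "\<lambda>(A, G, Y). bypass F C (V - set C) A G Y"
        and m = "\<lambda>(A, G, Y). length G" and k = "(A, G, Y)"] by fastforce
  obtain u where u: "u \<in> set G" "\<not> insertable F (A @ Y) u"
    using longest_cycle_bypass_gap[OF C longest bp] by blast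
  have "u \<in> V" using u(1) bypass_rotation(2)[OF bp C] digraph_cycle_subset[OF D C] by blast
  moreover have "hd Y \<in> V"
    using bp unfolding bypass_def is_path_iff by (metis DiffD1 hd_in_set subsetD)
  ultimately show False
    using minimal_bypass_degree_sum[OF bp minimal D C longest refl u]
      deg[rule_format, of u u] deg[rule_format, of "hd Y" "hd Y"] by linarith
qed

section \<open>Hamiltonian paths and robust strong connectivity\<close>

text \<open>Delete y and let x take over the in-edges of y: a Hamiltonian cycle of the result, read
  from x and followed by y, is a Hamiltonian x-y path of F.\<close>

definition redirect_into :: "('a \<times> 'a) set \<Rightarrow> 'a set \<Rightarrow> 'a \<Rightarrow> 'a \<Rightarrow> ('a \<times> 'a) set" where
  "redirect_into F W x y = {(a, b). a \<in> W - {y} \<and> b \<in> W - {y} \<and> a \<noteq> b \<and>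
     (if b = x then (a, y) \<in> F else (a, b) \<in> F)}"

lemma digraph_redirect_into: "finite W \<Longrightarrow> digraph (W - {y}) (redirect_into F W x y)"
  by (auto simp: digraph_def redirect_into_def)

lemma card_le_card_Diff_singleton_plus_one: "card A \<le> card (A - {x}) + 1"
  by (simp add: card_Diff_singleton_if, linarith)

lemma indeg_redirect_into:
  assumes D: "digraph W F" and a: "a \<in> W - {y}"
  shows "indeg W F (if a = x then y else a) \<le> indeg (W - {y}) (redirect_into F W x y) a + 1"
proof -
  define z where "z = (if a = x then x else y)"
  have "{c \<in> W. (c, if a = x then y else a) \<in> F} - {z}
      \<subseteq> {c \<in> W - {y}. (c, a) \<in> redirect_into F W x y}"
    using D a by (auto simp: digraph_def redirect_into_def z_def)
  then have "card ({c \<in> W. (c, if a = x then y else a) \<in> F} - {z})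
      \<le> indeg (W - {y}) (redirect_into F W x y) a"
    unfolding indeg_def using D by (intro card_mono) (auto simp: digraph_def)
  then show ?thesis
    using card_le_card_Diff_singleton_plus_one[of _ z] unfolding indeg_def by (meson add_right_mono le_trans)
qed

lemma outdeg_redirect_into:
  assumes D: "digraph W F" and b: "b \<in> W - {y}" and x: "x \<in> W - {y}"
  shows "outdeg W F b \<le> outdeg (W - {y}) (redirect_into F W x y) b + 1"
proof -
  define z where "z = (if b = x then y else x)"
  define g where "g c = (if c = y then x else c)" for c
  have "inj_on g ({c \<in> W. (b, c) \<in> F} - {z})" by (auto simp: inj_on_def g_def z_def)
  moreover have "g ` ({c \<in> W. (b, c) \<in> F} - {z}) \<subseteq> {c \<in> W - {y}. (b, c) \<in> redirect_into F W x y}"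
    using D b x by (auto simp: digraph_def redirect_into_def g_def z_def)
  ultimately have "card ({c \<in> W. (b, c) \<in> F} - {z}) \<le> outdeg (W - {y}) (redirect_into F W x y) b"
    unfolding outdeg_def using D by (intro card_inj_on_le) (auto simp: digraph_def)
  then show ?thesis
    using card_le_card_Diff_singleton_plus_one[of _ z] unfolding outdeg_def by (meson add_right_mono le_trans)
qed

lemma redirect_into_cycle_imp_path:
  assumes c: "is_cycle (redirect_into F W x y) c" and hd: "hd c = x"
  shows "is_path F (c @ [y])"
proof -
  have c_ne: "c \<noteq> []" and dist: "distinct c" and edges: "cycle_edges c \<subseteq> redirect_into F W x y"
    using c by (auto simp: is_cycle_iff)
  have "set c \<subseteq> W - {y}"
    using is_cycle_subset[OF c, of "W - {y}"] by (auto simp: redirect_into_def)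
  moreover have "path_edges c \<subseteq> F"
  proof
    fix e assume e: "e \<in> path_edges c"
    then obtain a b where ab: "e = (a, b)" "b \<noteq> x"
      using path_edges_hd_notin[OF dist] hd by (metis surj_pair)
    then show "e \<in> F"
      using e edges path_edges_subset_cycle_edges[of c] by (auto simp: redirect_into_def)
  qed
  moreover have "(last c, y) \<in> F"
    using edges c_ne hd by (auto simp: cycle_edges_conv_path_edges redirect_into_def)
  ultimately show ?thesis using c_ne dist by (auto simp: is_path_iff path_edges_append)
qed

theorem hamiltonian_connected_if_degree_sum:
  assumes D: "digraph W F"
    and deg: "\<forall>a \<in> W. \<forall>b \<in> W. card W + 1 \<le> indeg W F a + outdeg W F b"
  shows "hamiltonian_connected W F"
  unfolding hamiltonian_connected_def
proof (intro ballI impI)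
  fix x y assume x: "x \<in> W" and y: "y \<in> W" and "x \<noteq> y"
  define F' where "F' = redirect_into F W x y"
  have fin: "finite W" and loops: "\<And>v. (v, v) \<notin> F" using D by (auto simp: digraph_def)
  have "3 \<le> card W"
    using indeg_plus_outdeg_le_double_card[OF fin x loops] deg x by fastforce
  moreover have card_W: "card (W - {y}) + 1 = card W" using card_Suc_Diff1[OF fin y] by simp
  moreover have
    "\<forall>a \<in> W - {y}. \<forall>b \<in> W - {y}. card (W - {y}) \<le> indeg (W - {y}) F' a + outdeg (W - {y}) F' b"
  proof (intro ballI)
    fix a b assume a: "a \<in> W - {y}" and b: "b \<in> W - {y}"
    have "card W + 1 \<le> indeg W F (if a = x then y else a) + outdeg W F b"
      using deg a b y by auto
    then show "card (W - {y}) \<le> indeg (W - {y}) F' a + outdeg (W - {y}) F' b"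
      using indeg_redirect_into[OF D a, of x] outdeg_redirect_into[OF D b, of x] x \<open>x \<noteq> y\<close> card_W
      by (simp add: F'_def)
  qed
  ultimately obtain c where c: "is_cycle F' c" "set c = W - {y}"
    using hamiltonian_cycle_if_degree_sum[OF digraph_redirect_into[OF fin], of y F x]
    unfolding F'_def by auto
  then obtain j where j: "hd (rotate j c) = x" using rotate_to_hd x \<open>x \<noteq> y\<close> by fastforce
  have "is_path F (rotate j c @ [y])"
    using redirect_into_cycle_imp_path[of F W x y "rotate j c"] c j by (simp add: F'_def)
  moreover have "set (rotate j c @ [y]) = W" using c y by auto
  moreover have "hd (rotate j c @ [y]) = x" using c j by (cases "rotate j c") (auto simp: is_cycle_iff)
  ultimately show "\<exists>p. is_path F p \<and> set p = W \<and> hd p = x \<and> last p = y" by fastforce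
qed

lemma common_neighbour_if_degree_sum:
  assumes D: "digraph W F" and X: "X \<subseteq> W" "card X \<le> 2"
    and xy: "x \<in> W - X" "y \<in> W - X" "x \<noteq> y" "(x, y) \<notin> F"
    and deg: "card W + 1 \<le> indeg W F y + outdeg W F x"
  shows "\<exists>z \<in> W - X. (x, z) \<in> F \<and> (z, y) \<in> F"
proof (rule ccontr)
  assume none: "\<not> ?thesis"
  define U where "U = W - X - {x, y}"
  have fin: "finite W" "finite X" and loops: "\<And>v. (v, v) \<notin> F"
    using D X(1) by (auto simp: digraph_def intro: finite_subset)
  have "indeg U F y + outdeg U F x \<le> card U"
    using indeg_plus_outdeg_le_card[of U y F x] fin none by (auto simp: U_def)
  moreover have "indeg W F y \<le> indeg U F y + card X"
  proof -
    have "{v \<in> W. (v, y) \<in> F} \<subseteq> {v \<in> U. (v, y) \<in> F} \<union> X"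
      using loops xy by (auto simp: U_def)
    then have "indeg W F y \<le> card ({v \<in> U. (v, y) \<in> F} \<union> X)"
      unfolding indeg_def using fin by (intro card_mono) (auto simp: U_def)
    then show ?thesis unfolding indeg_def using card_Un_le le_trans by blast
  qed
  moreover have "outdeg W F x \<le> outdeg U F x + card X"
  proof -
    have "{v \<in> W. (x, v) \<in> F} \<subseteq> {v \<in> U. (x, v) \<in> F} \<union> X"
      using loops xy by (auto simp: U_def)
    then have "outdeg W F x \<le> card ({v \<in> U. (x, v) \<in> F} \<union> X)"
      unfolding outdeg_def using fin by (intro card_mono) (auto simp: U_def)
    then show ?thesis unfolding outdeg_def using card_Un_le le_trans by blast
  qed
  moreover have "card U + 2 + card X = card W"
  proof -
    have "card (W - X) = card W - card X" "card X \<le> card W"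
      using X fin by (simp_all add: card_Diff_subset card_mono)
    moreover have "card U = card (W - X) - 2" "2 \<le> card (W - X)"
      using xy fin card_mono[of "W - X" "{x, y}"] by (simp_all add: U_def card_Diff_subset)
    ultimately show ?thesis by linarith
  qed
  ultimately show False using deg X(2) by linarith
qed

lemma strongly_connected_delete_two:
  assumes D: "digraph W F"
    and deg: "\<forall>a \<in> W. \<forall>b \<in> W. card W + 1 \<le> indeg W F a + outdeg W F b"
    and X: "X \<subseteq> W" "card X \<le> 2"
  shows "strongly_connected (W - X) (induced_edges F (W - X))"
  unfolding strongly_connected_def
proof (intro ballI)
  fix x y assume x: "x \<in> W - X" and y: "y \<in> W - X"
  consider "x = y" | "x \<noteq> y" "(x, y) \<in> F" | "x \<noteq> y" "(x, y) \<notin> F" by blast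
  then show "\<exists>p. is_path (induced_edges F (W - X)) p \<and> set p \<subseteq> W - X \<and> hd p = x \<and> last p = y"
  proof cases
    case 1
    with x show ?thesis by (intro exI[of _ "[x]"]) (simp add: is_path_iff)
  next
    case 2
    with x y show ?thesis by (intro exI[of _ "[x, y]"]) (simp add: is_path_iff induced_edges_def)
  next
    case 3
    then obtain z where "z \<in> W - X" "(x, z) \<in> F" "(z, y) \<in> F"
      using common_neighbour_if_degree_sum[OF D X x y] deg x y by blast
    moreover have "z \<noteq> x" "z \<noteq> y" using calculation D by (auto simp: digraph_def)
    ultimately show ?thesis using x y 3
      by (intro exI[of _ "[x, z, y]"]) (auto simp: is_path_iff induced_edges_def)
  qed
qed

section \<open>Longest S-cycles\<close>

lemma min_semidegree_le:
  assumes "finite V" "v \<in> V"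
  shows "min_semidegree V E \<le> indeg V E v" "min_semidegree V E \<le> outdeg V E v"
  using assms by (auto simp: min_semidegree_def intro: min.coboundedI1 min.coboundedI2)

lemma le_double_plus_two_if_ceiling_half_le:
  fixes m d :: nat
  assumes "\<lceil>real m / 2\<rceil> - 1 \<le> int d"
  shows "m \<le> 2 * d + 2"
proof -
  have "real m / 2 \<le> of_int \<lceil>real m / 2\<rceil>" by (rule le_of_int_ceiling)
  also have "\<dots> \<le> real d + 1" using assms by simp
  finally have "real m \<le> real (2 * d + 2)" by simp
  then show ?thesis by (simp only: of_nat_le_iff)
qed

lemma longest_S_cycle_indeg_plus_outdeg_le:
  assumes SC: "is_S_cycle E S C" and longest: "\<forall>C'. is_S_cycle E S C' \<longrightarrow> length C' \<le> length C"
    and P: "is_path E P" "set P \<inter> set C = {}"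
  shows "indeg (set C) E (hd P) + outdeg (set C) E (last P) \<le> length C"
proof (rule indeg_plus_outdeg_cycle_le)
  show "distinct C" using SC by (simp add: is_S_cycle_def is_cycle_iff)
  show "\<forall>(a, b) \<in> cycle_edges C. (a, hd P) \<notin> E \<or> (last P, b) \<notin> E"
  proof (clarify)
    fix a b assume "(a, b) \<in> cycle_edges C" "(a, hd P) \<in> E" "(last P, b) \<in> E"
    then obtain C' where "is_S_cycle E S C'" "length C' = length C + length P"
      using is_S_cycle_insert_path[OF SC _ P] by blast
    with longest P(1) show False by (fastforce simp: is_path_iff)
  qed
qed

lemma longest_S_cycle_complement_degree:
  assumes D: "digraph V E" and SC: "is_S_cycle E S C"
    and longest: "\<forall>C'. is_S_cycle E S C' \<longrightarrow> length C' \<le> length C"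
    and semideg: "\<And>v. v \<in> V \<Longrightarrow> d \<le> indeg V E v \<and> d \<le> outdeg V E v"
    and dense: "card V \<le> 2 * d + 1"
    and x: "x \<in> V - set C" and y: "y \<in> V - set C"
  shows "2 * d \<le> indeg (V - set C) E x + outdeg (V - set C) E y + length C"
proof -
  define H where "H = V - set C"
  have fin: "finite V" and C: "is_cycle E C" using D SC by (auto simp: digraph_def is_S_cycle_def)
  then have CV: "set C \<subseteq> V" using digraph_cycle_subset[OF D] by blast
  have reach: "2 * d \<le> indeg H E u + outdeg H E v + length C"
    if u: "u \<in> H" and v: "v \<in> H" and uv: "(u, v) \<in> (induced_edges E H)\<^sup>*" for u v
  proof -
    obtain P where P: "is_path E P" "set P \<subseteq> H" "hd P = u" "last P = v"
      using rtrancl_induced_edges_imp_path[OF uv u] by blast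
    then have "indeg (set C) E u + outdeg (set C) E v \<le> length C"
      using longest_S_cycle_indeg_plus_outdeg_le[OF SC longest P(1)] by (auto simp: H_def)
    then show ?thesis
      using semideg[of u] semideg[of v] u v indeg_split[OF fin CV, of E u]
        outdeg_split[OF fin CV, of E v] by (auto simp: H_def)
  qed
  txt \<open>The bound for pairs joined by a path inside H is enough to make H strongly connected.\<close>
  have "(x, y) \<in> (induced_edges E H)\<^sup>*"
  proof (rule rtrancl_if_degree_sum[OF digraph_induced[OF D]])
    fix u v assume uv: "u \<in> H" "v \<in> H" "(u, v) \<in> (induced_edges E H)\<^sup>*"
    then show "card H \<le> indeg H (induced_edges E H) u + outdeg H (induced_edges E H) v + 1"
      using reach[OF uv] dense card_eq_cycle_length_plus_card_Diff[OF D C]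
      by (simp add: indeg_induced outdeg_induced H_def)
  qed (use x y in \<open>auto simp: H_def\<close>)
  then show ?thesis using reach x y by (simp add: H_def)
qed

text \<open>Otherwise the ends of the closing edge of C have neighbours in the complement H, and a path
  between them through H could be spliced into C.\<close>

lemma longest_S_cycle_longer_than_semidegree:
  assumes D: "digraph V E" and SC: "is_S_cycle E S C"
    and longest: "\<forall>C'. is_S_cycle E S C' \<longrightarrow> length C' \<le> length C"
    and strong: "strongly_connected (V - set C) (induced_edges E (V - set C))"
    and semideg: "\<And>v. v \<in> V \<Longrightarrow> d \<le> indeg V E v \<and> d \<le> outdeg V E v"
  shows "d < length C"
proof (rule ccontr)
  assume short: "\<not> d < length C"
  have fin: "finite V" and loops: "\<And>v. (v, v) \<notin> E" and C: "is_cycle E C"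
    using D SC by (auto simp: digraph_def is_S_cycle_def)
  have CV: "set C \<subseteq> V" using digraph_cycle_subset[OF D C] .
  have C_ne: "C \<noteq> []" and card_C: "card (set C) = length C"
    using C by (auto simp: is_cycle_iff distinct_card)
  define a where "a = last C"
  define b where "b = hd C"
  have ab: "(a, b) \<in> cycle_edges C" "a \<in> V" "b \<in> V"
    using C_ne CV by (auto simp: a_def b_def cycle_edges_conv_path_edges)
  have "outdeg (set C) E a < length C" "indeg (set C) E b < length C"
    using outdeg_less_card[of "set C" a E] indeg_less_card[of "set C" b E] C_ne loops card_C
    by (auto simp: a_def b_def)
  then have "0 < outdeg (V - set C) E a" "0 < indeg (V - set C) E b"
    using semideg[OF ab(2)] semideg[OF ab(3)] short outdeg_split[OF fin CV, of E a]
      indeg_split[OF fin CV, of E b] by linarith+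
  then obtain w w' where w: "w \<in> V - set C" "(a, w) \<in> E" and w': "w' \<in> V - set C" "(w', b) \<in> E"
    unfolding indeg_def outdeg_def by (metis (no_types, lifting) card.empty empty_Collect_eq less_irrefl)
  then obtain P where P: "is_path (induced_edges E (V - set C)) P" "set P \<subseteq> V - set C"
    "hd P = w" "last P = w'"
    using strong w(1) w'(1) unfolding strongly_connected_def by blast
  then have "is_path E P" by (auto intro: is_path_mono simp: induced_edges_def)
  then obtain C' where "is_S_cycle E S C'" "length C' = length C + length P"
    using is_S_cycle_insert_path[OF SC ab(1)] P w w' by blast
  with longest P(1) show False by (fastforce simp: is_path_iff)
qed

theorem lemma6:
  fixes V :: "'a set" and E :: "('a \<times> 'a) set" and S C :: "'a list" and k n :: nat
  assumes D: "digraph V E"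
    and n: "n = card V"
    and k: "k = length S" "k \<ge> 3"
    and deg: "V \<noteq> {}" "int (min_semidegree V E) \<ge> \<lceil>real (n + k) / 2\<rceil> - 1"
    and S: "distinct S" "set S \<subseteq> V"
    and C: "is_S_cycle E S C"
    and longest: "\<forall>C'. is_S_cycle E S C' \<longrightarrow> length C' \<le> length C"
    and nonham: "set C \<noteq> V"
  shows "hamiltonian_connected (V - set C) (induced_edges E (V - set C))
       \<and> (\<forall>x \<in> V - set C. \<forall>y \<in> V - set C.
            indeg (V - set C) E x + outdeg (V - set C) E y \<ge> card (V - set C) + k - 2)
       \<and> (\<forall>X. X \<subseteq> V - set C \<longrightarrow> card X \<le> 2 \<longrightarrow>
            strongly_connected (V - set C - X) (induced_edges E (V - set C - X)))
       \<and> k \<le> card (V - set C) \<and> card (V - set C) \<le> (n - k) div 2"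
proof -
  define H where "H = V - set C"
  define d where "d = min_semidegree V E"
  have fin: "finite V" and cycle: "is_cycle E C" using D C by (auto simp: digraph_def is_S_cycle_def)
  have semideg: "\<And>v. v \<in> V \<Longrightarrow> d \<le> indeg V E v \<and> d \<le> outdeg V E v"
    using min_semidegree_le[OF fin] by (simp add: d_def)
  have dense: "n + k \<le> 2 * d + 2"
    using le_double_plus_two_if_ceiling_half_le deg(2) by (simp add: d_def)
  have n_split: "n = length C + card H"
    using card_eq_cycle_length_plus_card_Diff[OF D cycle] n by (simp add: H_def)
  have deg_H: "card H + k \<le> indeg H E x + outdeg H E y + 2" if "x \<in> H" "y \<in> H" for x y
    using longest_S_cycle_complement_degree[OF D C longest semideg _ that[unfolded H_def]]
      dense n_split n k(2) by (simp add: H_def)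
  have HD: "digraph H (induced_edges E H)" using digraph_induced[OF D] by (simp add: H_def)
  have deg_H': "\<forall>a \<in> H. \<forall>b \<in> H.
      card H + 1 \<le> indeg H (induced_edges E H) a + outdeg H (induced_edges E H) b"
    using deg_H k(2) by (fastforce simp: indeg_induced outdeg_induced)
  have strong: "strongly_connected (H - X) (induced_edges E (H - X))" if "X \<subseteq> H" "card X \<le> 2" for X
    using strongly_connected_delete_two[OF HD deg_H' that] that by (simp add: induced_edges_induced_edges)
  have "d < length C"
    using longest_S_cycle_longer_than_semidegree[OF D C longest _ semideg] strong[of "{}"]
    by (simp add: H_def)
  then have "card H \<le> (n - k) div 2" using dense n_split by linarith
  moreover obtain x where "x \<in> H" using nonham digraph_cycle_subset[OF D cycle] by (auto simp: H_def)
  then have "k \<le> card H"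
    using deg_H[of x x] indeg_plus_outdeg_le_double_card[of H x E] D fin by (auto simp: H_def digraph_def)
  moreover have "\<forall>x \<in> H. \<forall>y \<in> H. card H + k - 2 \<le> indeg H E x + outdeg H E y"
    using deg_H by fastforce
  ultimately show ?thesis
    using hamiltonian_connected_if_degree_sum[OF HD deg_H'] strong by (auto simp: H_def)
qed

end
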